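(* Let $r>0$, $\delta>0$, $R:=r/\delta$, and suppose $R+\tfrac12\in\mathbb{Z}$. Then $$\int_{-\pi}^{\pi}\Delta_\delta(r\cos\theta)\cos\theta\,d\theta\ \ge\ \frac{16\sqrt2}{3\pi^2}\,\frac{\delta^{3/2}}{\sqrt r}.$$
   Context: For $\delta>0$, $Q_\delta(t):=\delta\lfloor t/\delta+1/2\rfloor$ and $\Delta_\delta(t):=t-Q_\delta(t)$. *)

theory Defs
  imports "HOL-Analysis.Analysis"
begin

definition Qd :: "real \<Rightarrow> real \<Rightarrow> real" where
  "Qd \<delta> t = \<delta> * of_int \<lfloor>t / \<delta> + 1/2\<rfloor>"

definition Dd :: "real \<Rightarrow> real \<Rightarrow> real" where
  "Dd \<delta> t = t - Qd \<delta> t"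

end

theory Submission
  imports Defs
begin

(*
  Substituting t = r cos theta gives Dd delta (r cos theta) cos theta = delta * saw_cos R theta,
  where saw_cos R theta = (frac (R cos theta + 1/2) - 1/2) cos theta.  The integral of saw_cos
  is computed by an exact antiderivative: with the periodic parabola
  parab x = frac x * (1 - frac x) and parab_cos R t = parab (R cos t + 1/2),
     antider R t = - parab_cos R t * cos t / (2 R sin t)
  satisfies antider' = weight - saw_cos off finitely many points, where
     weight R t = parab_cos R t / (2 R sin^2 t) >= 0.
  Because R + 1/2 is an integer, parab_cos R is an explicit polynomial in cos t near the
  zeros 0, pi, -pi of sin; this makes antider continuous on [-pi, pi] with antider (+-pi) = 0,
  so saw_cos and weight have the same integral, and it gives weight R t >= (1 - R s^2/2)/4,
  s the distance from t to the nearest of 0, +-pi.  Integrating this minorant over three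
  windows of half-width T = 3/4 sqrt (2/R) yields the lower bound 39/64 sqrt (2/R), and
  16/(3 pi^2) < 39/64 gives the stated constant.
*)

lemma cos_ge_one_minus_half_sq: "1 - x\<^sup>2 / 2 \<le> cos (x::real)"
proof -
  have "cos x = 1 - 2 * (sin (x/2))\<^sup>2" using cos_double_sin[of "x/2"] by simp
  moreover have "(sin (x/2))\<^sup>2 \<le> (x/2)\<^sup>2"
    using abs_sin_x_le_abs_x[of "x/2"] by (metis abs_le_square_iff)
  ultimately show ?thesis by (simp add: power_divide)
qed

definition parab :: "real \<Rightarrow> real" where
  "parab x = frac x * (1 - frac x)"

lemma parab_nonneg: "0 \<le> parab x"
  using frac_ge_0[of x] frac_lt_1[of x] by (simp add: parab_def)

(* Symmetry under x -> 1 - x; combined with cos (t + pi) = - cos t it gives pi-periodicity below. *)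
lemma parab_reflect: "parab (1 - x) = parab x"
proof -
  have "frac (1 - x) = frac (- x)" using frac_add_int_left[of 1 "- x"] by simp
  thus ?thesis by (simp add: parab_def frac_neg)
qed

lemma parab_near_int:
  assumes "n \<in> \<int>" "\<bar>a\<bar> \<le> 1"
  shows "parab (n + a) = \<bar>a\<bar> * (1 - \<bar>a\<bar>)"
proof -
  have "parab (n + a) = parab a" by (simp add: parab_def frac_add_int_left[OF assms(1)])
  moreover have "parab a = \<bar>a\<bar> * (1 - \<bar>a\<bar>)"
  proof -
    consider "0 \<le> a" "a < 1" | "a = 1" | "-1 < a" "a < 0" | "a = -1" using assms(2) by linarith
    thus ?thesis
    proof cases
      case 1 thus ?thesis by (simp add: parab_def frac_eq)
    next
      case 3
      have "frac a = a + 1" using 3 by (subst frac_unique_iff) auto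
      thus ?thesis using 3 by (simp add: parab_def algebra_simps)
    qed (simp_all add: parab_def)
  qed
  ultimately show ?thesis by simp
qed

lemma isCont_parab: "isCont parab x"
proof (cases "x \<in> \<int>")
  case False
  thus ?thesis unfolding parab_def by (intro continuous_intros continuous_frac)
next
  case True
  have "\<forall>\<^sub>F y in nhds x. parab y = \<bar>y - x\<bar> * (1 - \<bar>y - x\<bar>)"
    unfolding eventually_nhds_metric
    using parab_near_int[OF True, of "y - x" for y]
    by (intro exI[of _ 1]) (auto simp: dist_real_def)
  thus ?thesis by (subst isCont_cong) (auto intro!: continuous_intros)
qed

lemma parab_has_derivative:
  assumes "x \<notin> \<int>"
  shows "(parab has_real_derivative (1 - 2 * frac x)) (at x)"
proof -
  have fl: "((\<lambda>y. of_int \<lfloor>y\<rfloor>) has_real_derivative 0) (at x)"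
    by (rule floor_has_real_derivative) (use assms in auto)
  have eq: "parab = (\<lambda>y. (y - of_int \<lfloor>y\<rfloor>) * (1 - (y - of_int \<lfloor>y\<rfloor>)))"
    by (simp add: fun_eq_iff parab_def frac_def)
  show ?thesis unfolding eq
    by (auto intro!: derivative_eq_intros fl simp: frac_def algebra_simps)
qed

(* The functions of the angle t, for the scaled radius R.  At the zeros of sin, weight is
  given its limiting value 1/4 (for R + 1/2 integral), so the minorant below holds everywhere. *)
definition parab_cos :: "real \<Rightarrow> real \<Rightarrow> real" where
  "parab_cos R t = parab (R * cos t + 1/2)"

definition saw_cos :: "real \<Rightarrow> real \<Rightarrow> real" where
  "saw_cos R t = (frac (R * cos t + 1/2) - 1/2) * cos t"

definition weight :: "real \<Rightarrow> real \<Rightarrow> real" where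
  "weight R t = (if sin t = 0 then 1/4 else parab_cos R t / (2 * R * (sin t)\<^sup>2))"

definition antider :: "real \<Rightarrow> real \<Rightarrow> real" where
  "antider R t = - parab_cos R t * cos t / (2 * R * sin t)"

(* All these functions are pi-periodic, so it suffices to study them near t = 0. *)
lemma parab_cos_shift_pi: "parab_cos R (t + pi) = parab_cos R t"
  using parab_reflect[of "R * cos t + 1/2"] by (simp add: parab_cos_def algebra_simps)

lemma antider_shift_pi: "antider R (t + pi) = antider R t"
  by (simp add: antider_def parab_cos_shift_pi)

lemma weight_shift_pi: "weight R (t + pi) = weight R t"
  by (simp add: weight_def parab_cos_shift_pi)

lemma weight_nonneg: "0 \<le> R \<Longrightarrow> 0 \<le> weight R t"
  using parab_nonneg by (simp add: weight_def parab_cos_def)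

(* If R + 1/2 is an integer, then near t = 0 the argument R cos t + 1/2 lies just below the
  integer R + 1/2, so parab_cos R t is a polynomial in cos t. *)
lemma parab_cos_near_zero:
  assumes "R + 1/2 \<in> \<int>" "0 \<le> R" "R * (1 - cos t) \<le> 1"
  shows "parab_cos R t = R * (1 - cos t) * (1 - R * (1 - cos t))"
proof -
  have a: "\<bar>- (R * (1 - cos t))\<bar> = R * (1 - cos t)" using assms(2) by simp
  have shift: "R * cos t + 1/2 = (R + 1/2) + - (R * (1 - cos t))" by (simp add: algebra_simps)
  show ?thesis unfolding parab_cos_def shift
    using parab_near_int[OF assms(1), of "- (R * (1 - cos t))"] a assms(3) by simp
qed

(* The resulting closed form of antider near 0, which no longer divides by sin t. *)
lemma antider_near_zero:
  assumes "R + 1/2 \<in> \<int>" "0 < R" "R * (1 - cos t) \<le> 1" "cos t \<noteq> -1"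
  shows "antider R t = - sin t * (1 - R * (1 - cos t)) * cos t / (2 * (1 + cos t))"
proof (cases "sin t = 0")
  case True thus ?thesis by (simp add: antider_def)
next
  case False
  have "sin t * sin t = (1 - cos t) * (1 + cos t)"
    using sin_squared_eq[of t] by (simp add: power2_eq_square algebra_simps)
  hence "- (R * (1 - cos t) * (1 - R * (1 - cos t))) * cos t * (2 * (1 + cos t))
       = - sin t * (1 - R * (1 - cos t)) * cos t * (2 * R * sin t)"
    by algebra
  moreover have "1 + cos t \<noteq> 0" using assms(4) by linarith
  ultimately show ?thesis using False assms(2)
    by (simp add: antider_def parab_cos_near_zero[OF assms(1) _ assms(3)] frac_eq_eq)
qed

lemma weight_ge_near_zero:
  assumes "R + 1/2 \<in> \<int>" "0 < R" "R * t\<^sup>2 / 2 \<le> 1"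
  shows "(1 - R * t\<^sup>2 / 2) / 4 \<le> weight R t"
proof (cases "sin t = 0")
  case True thus ?thesis using assms(2) by (simp add: weight_def)
next
  case False
  define a where "a = R * (1 - cos t)"
  have "a \<le> R * t\<^sup>2 / 2"
    unfolding a_def using cos_ge_one_minus_half_sq[of t] assms(2) by (simp add: mult_left_mono)
  hence a: "a \<le> 1" "1 - R * t\<^sup>2 / 2 \<le> 1 - a" using assms(3) by auto
  have "cos t \<noteq> 1" "cos t \<noteq> -1" using False sin_squared_eq[of t] by auto
  hence cos: "cos t \<noteq> 1" "0 < 1 + cos t" using cos_ge_minus_one[of t] by linarith+
  have "sin t ^ 2 = (1 - cos t) * (1 + cos t)"
    using sin_squared_eq[of t] by (simp add: algebra_simps power2_eq_square)
  hence "weight R t = (1 - a) / (2 * (1 + cos t))"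
    using False cos assms(2)
    by (simp add: weight_def parab_cos_near_zero[OF assms(1) _ a(1)[unfolded a_def]] a_def frac_eq_eq)
  moreover have "(1 - a) / 4 \<le> (1 - a) / (2 * (1 + cos t))"
    using a cos by (intro divide_left_mono) auto
  moreover have "(1 - R * t\<^sup>2 / 2) / 4 \<le> (1 - a) / 4" using a(2) by simp
  ultimately show ?thesis by linarith
qed

lemma weight_lower_bound:
  assumes "R + 1/2 \<in> \<int>" "0 < R" "u \<in> {-pi, 0, pi}" "R * (t - u)\<^sup>2 / 2 \<le> 1"
  shows "(1 - R * (t - u)\<^sup>2 / 2) / 4 \<le> weight R t"
proof -
  have "weight R t = weight R (t - u)"
    using assms(3) weight_shift_pi[of R t] weight_shift_pi[of R "t - pi"] by auto
  thus ?thesis using weight_ge_near_zero[OF assms(1,2) assms(4)] by simp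
qed

lemma isCont_parab_cos: "isCont (parab_cos R) t"
  unfolding parab_cos_def[abs_def] by (rule isCont_o2[OF _ isCont_parab]) (intro continuous_intros)

lemma isCont_antider_zero:
  assumes "R + 1/2 \<in> \<int>" "0 < R"
  shows "isCont (antider R) 0"
proof -
  define E where "E t = - sin t * (1 - R * (1 - cos t)) * cos t / (2 * (1 + cos t))" for t
  have "open {t. R * (1 - cos t) < 1 \<and> -1 < cos t}"
    by (intro open_Collect_conj open_Collect_less continuous_intros)
  hence "\<forall>\<^sub>F t in nhds 0. t \<in> {t. R * (1 - cos t) < 1 \<and> -1 < cos t}"
    by (rule eventually_nhds_in_open) simp
  hence "\<forall>\<^sub>F t in nhds 0. antider R t = E t"
  proof eventually_elim
    case (elim t)
    show ?case unfolding E_def by (rule antider_near_zero[OF assms]) (use elim in auto)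
  qed
  moreover have "isCont E 0" unfolding E_def by (intro continuous_intros) auto
  ultimately show ?thesis by (simp add: isCont_cong)
qed

(* antider is continuous on [-pi, pi]; at the zeros of sin this follows from the case t = 0
  by pi-periodicity. *)
lemma continuous_on_antider:
  assumes "R + 1/2 \<in> \<int>" "0 < R"
  shows "continuous_on {-pi..pi} (antider R)"
proof (intro continuous_at_imp_continuous_on ballI)
  fix t assume t: "t \<in> {-pi..pi}"
  have at_zero: "isCont (antider R) 0" by (rule isCont_antider_zero[OF assms])
  consider "sin t \<noteq> 0" | "t = 0" | "t = pi" | "t = -pi"
    using t sin_zero_pi_iff[of t] by force
  thus "isCont (antider R) t"
  proof cases
    case 1
    thus ?thesis unfolding antider_def[abs_def] using assms(2)
      by (intro continuous_intros isCont_parab_cos) auto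
  next
    case 3
    have "isCont (\<lambda>s. antider R (s - pi)) pi"
      using isCont_o2[where f="\<lambda>s. s - pi" and a=pi and g="antider R"] at_zero
      by (simp add: continuous_intros)
    thus ?thesis using 3 antider_shift_pi[of R "s - pi" for s] by simp
  next
    case 4
    have "isCont (\<lambda>s. antider R (s + pi)) (-pi)"
      using isCont_o2[where f="\<lambda>s. s + pi" and a="-pi" and g="antider R"] at_zero
      by (simp add: continuous_intros)
    thus ?thesis using 4 by (simp add: antider_shift_pi)
  qed (use at_zero in simp)
qed

lemma antider_has_derivative:
  assumes "0 < R" "sin t \<noteq> 0" "R * cos t + 1/2 \<notin> \<int>"
  shows "(antider R has_real_derivative (weight R t - saw_cos R t)) (at t)"
proof -
  define f where "f = frac (R * cos t + 1/2)"
  have dp: "(parab_cos R has_real_derivative (1 - 2 * f) * (- R * sin t)) (at t)"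
    unfolding parab_cos_def[abs_def] f_def
    by (rule DERIV_chain2[where g="\<lambda>s. R * cos s + 1/2", OF parab_has_derivative[OF assms(3)]])
      (auto intro!: derivative_eq_intros)
  have saw: "saw_cos R t = (f - 1/2) * cos t" by (simp add: saw_cos_def f_def)
  have pythagoras: "sin t * sin t = 1 - cos t * cos t"
    using sin_cos_squared_add[of t] by (simp add: power2_eq_square)
  show ?thesis unfolding antider_def[abs_def]
    apply (rule derivative_eq_intros dp refl)+
    using assms apply simp
    using assms apply (simp add: weight_def saw field_simps power2_eq_square)
    using pythagoras by algebra
qed

lemma finite_cos_preimage:
  assumes "finite A"
  shows "finite {t \<in> {-pi..pi}. cos t \<in> A}"
proof -
  have "{t \<in> {-pi..pi}. cos t \<in> A} \<subseteq> arccos ` A \<union> (\<lambda>c. - arccos c) ` A"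
  proof
    fix t assume t: "t \<in> {t \<in> {-pi..pi}. cos t \<in> A}"
    show "t \<in> arccos ` A \<union> (\<lambda>c. - arccos c) ` A"
    proof (cases "0 \<le> t")
      case True
      hence "t = arccos (cos t)" using t by (simp add: arccos_cos)
      thus ?thesis using t by blast
    next
      case False
      hence "t = - arccos (cos t)" using t by (simp add: arccos_cos2)
      thus ?thesis using t by blast
    qed
  qed
  thus ?thesis using assms by (auto intro: finite_subset)
qed

(* Hence R cos t + 1/2 hits the integers only finitely often on [-pi, pi]; these are the
  jumps of frac excluded in the fundamental theorem of calculus. *)
lemma finite_integer_crossings:
  assumes "R \<noteq> 0"
  shows "finite {t \<in> {-pi..pi}. R * cos t + 1/2 \<in> \<int>}"
proof -
  define A where "A = (\<lambda>x. (x - 1/2) / R) ` {x \<in> \<int>. - \<bar>R\<bar> + 1/2 \<le> x \<and> x \<le> \<bar>R\<bar> + 1/2}"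
  have "finite A" unfolding A_def by (intro finite_imageI finite_int_segment)
  moreover have "{t \<in> {-pi..pi}. R * cos t + 1/2 \<in> \<int>} \<subseteq> {t \<in> {-pi..pi}. cos t \<in> A}"
  proof safe
    fix t assume "R * cos t + 1/2 \<in> \<int>"
    moreover have "\<bar>R * cos t\<bar> \<le> \<bar>R\<bar>"
      by (simp add: abs_mult mult_left_le)
    moreover have "cos t = (R * cos t + 1/2 - 1/2) / R" using assms by simp
    ultimately show "cos t \<in> A" unfolding A_def by (intro image_eqI) auto
  qed
  ultimately show ?thesis using finite_cos_preimage finite_subset by blast
qed

(* The fundamental theorem of calculus with finitely many exceptional points; the boundary
  terms vanish because sin (+-pi) = 0. *)
lemma weight_minus_saw_has_integral:
  assumes "R + 1/2 \<in> \<int>" "0 < R"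
  shows "((\<lambda>t. weight R t - saw_cos R t) has_integral 0) {-pi..pi}"
proof -
  define S where "S = {0} \<union> {t \<in> {-pi..pi}. R * cos t + 1/2 \<in> \<int>}"
  have "((\<lambda>t. weight R t - saw_cos R t) has_integral (antider R pi - antider R (-pi))) {-pi..pi}"
  proof (rule fundamental_theorem_of_calculus_interior_strong[of S])
    show "finite S" using finite_integer_crossings assms(2) by (simp add: S_def)
    show "continuous_on {-pi..pi} (antider R)" by (rule continuous_on_antider[OF assms])
    fix t assume t: "t \<in> {-pi<..<pi} - S"
    hence "\<bar>t\<bar> < pi" "t \<noteq> 0" by (auto simp: S_def)
    hence "sin t \<noteq> 0" using sin_zero_pi_iff by blast
    moreover have "R * cos t + 1/2 \<notin> \<int>" using t by (auto simp: S_def)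
    ultimately show "(antider R has_vector_derivative (weight R t - saw_cos R t)) (at t)"
      using antider_has_derivative[OF assms(2)]
      by (simp add: has_real_derivative_iff_has_vector_derivative)
  qed simp
  thus ?thesis by (simp add: antider_def)
qed

lemma saw_cos_integrable: "saw_cos R integrable_on {-pi..pi}"
proof (rule measurable_bounded_by_integrable_imp_integrable_real[where g="\<lambda>_. 1"])
  have "saw_cos R \<in> borel_measurable borel"
    unfolding saw_cos_def[abs_def] frac_def by measurable
  thus "saw_cos R \<in> borel_measurable (lebesgue_on {-pi..pi})"
    by (simp add: measurable_completion measurable_restrict_space1)
  fix t
  have "\<bar>frac (R * cos t + 1/2) - 1/2\<bar> \<le> 1"
    using frac_ge_0[of "R * cos t + 1/2"] frac_lt_1[of "R * cos t + 1/2"] by linarith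
  thus "\<bar>saw_cos R t\<bar> \<le> 1" unfolding saw_cos_def abs_mult by (intro mult_le_one) auto
qed auto

lemma integral_ge_quadratic_minorant:
  fixes f :: "real \<Rightarrow> real"
  assumes "c \<le> d" "f integrable_on {c..d}"
    and "\<And>t. t \<in> {c..d} \<Longrightarrow> (1 - R * (t - u)\<^sup>2 / 2) / 4 \<le> f t"
  shows "((d - u) / 4 - R * (d - u)^3 / 24) - ((c - u) / 4 - R * (c - u)^3 / 24)
           \<le> integral {c..d} f"
proof (rule has_integral_le[OF _ integrable_integral[OF assms(2)] assms(3)])
  show "((\<lambda>t. (1 - R * (t - u)\<^sup>2 / 2) / 4) has_integral
      ((d - u) / 4 - R * (d - u)^3 / 24) - ((c - u) / 4 - R * (c - u)^3 / 24)) {c..d}"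
    using assms(1)
    by (intro fundamental_theorem_of_calculus)
      (auto intro!: derivative_eq_intros simp: has_real_derivative_iff_has_vector_derivative[symmetric]
        power2_eq_square field_simps)
qed

(* The lower bound T - R T^3 / 6 for the integral of weight, from the minorant on the windows
  [-pi, -pi + T], [-T, T], [pi - T, pi] and nonnegativity elsewhere. *)
lemma weight_integral_lower_bound:
  assumes "R + 1/2 \<in> \<int>" "0 < R" "weight R integrable_on {-pi..pi}"
    and "0 \<le> T" "T \<le> pi / 2" "R * T\<^sup>2 / 2 \<le> 1"
  shows "T - R * T^3 / 6 \<le> integral {-pi..pi} (weight R)"
proof -
  have integrable: "weight R integrable_on {c..d}" if "{c..d} \<subseteq> {-pi..pi}" for c d
    using integrable_subinterval_real[OF assms(3) that] .
  have near: "(1 - R * (t - u)\<^sup>2 / 2) / 4 \<le> weight R t" if "u \<in> {-pi, 0, pi}" "\<bar>t - u\<bar> \<le> T" for t u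
  proof (rule weight_lower_bound[OF assms(1,2) that(1)])
    have "(t - u)\<^sup>2 \<le> T\<^sup>2" using that(2) by (metis abs_le_square_iff abs_of_nonneg assms(4))
    hence "R * (t - u)\<^sup>2 \<le> R * T\<^sup>2" using assms(2) by (intro mult_left_mono) auto
    thus "R * (t - u)\<^sup>2 / 2 \<le> 1" using assms(6) by simp
  qed
  have left: "T / 4 - R * T^3 / 24 \<le> integral {-pi..-pi+T} (weight R)"
    using integral_ge_quadratic_minorant[of "-pi" "-pi+T" "weight R" R "-pi"] assms(4,5)
      integrable[of "-pi" "-pi+T"] near[of "-pi"] by auto
  have middle: "T / 2 - R * T^3 / 12 \<le> integral {-T..T} (weight R)"
  proof -
    have "(T - 0) / 4 - R * (T - 0)^3 / 24 - ((-T - 0) / 4 - R * (-T - 0)^3 / 24)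
        \<le> integral {-T..T} (weight R)"
      by (rule integral_ge_quadratic_minorant)
        (use assms(4,5) integrable[of "-T" T] near[of 0] in \<open>auto simp: abs_le_iff\<close>)
    thus ?thesis by (simp add: power3_eq_cube)
  qed
  have right: "T / 4 - R * T^3 / 24 \<le> integral {pi-T..pi} (weight R)"
    using integral_ge_quadratic_minorant[of "pi-T" pi "weight R" R pi] assms(4,5)
      integrable[of "pi-T" pi] near[of pi] by (auto simp: power3_eq_cube)
  have "integral {-T..T} (weight R) \<le> integral {-pi+T..pi-T} (weight R)"
    using assms(4,5) weight_nonneg[of R] assms(2) by (intro integral_subset_le integrable) auto
  moreover have "integral {-pi..pi} (weight R) = integral {-pi..-pi+T} (weight R)
      + integral {-pi+T..pi-T} (weight R) + integral {pi-T..pi} (weight R)"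
    using assms(4,5) integrable
    by (simp add: Henstock_Kurzweil_Integration.integral_combine)
  ultimately show ?thesis using left middle right by linarith
qed

(* The choice T = 3/4 sqrt (2/R); since R + 1/2 is a positive integer, R >= 1/2 and T <= pi/2. *)
lemma weight_integral_ge:
  assumes "R + 1/2 \<in> \<int>" "0 < R" "weight R integrable_on {-pi..pi}"
  shows "39/64 * sqrt (2/R) \<le> integral {-pi..pi} (weight R)"
proof -
  define T where "T = 3/4 * sqrt (2/R)"
  obtain m where m: "R + 1/2 = of_int m" using assms(1) by (auto elim: Ints_cases)
  hence "0 < m" using assms(2) by linarith
  hence "1/2 \<le> R" using m by linarith
  hence "sqrt (2/R) \<le> 2" using real_sqrt_le_mono[of "2/R" 4] by (simp add: field_simps)
  hence T_le: "T \<le> pi / 2" using pi_gt3 by (simp add: T_def)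
  have T_nonneg: "0 \<le> T" using assms(2) by (simp add: T_def)
  have T_sq: "R * T\<^sup>2 = 9/8"
  proof -
    have "T\<^sup>2 = 9/16 * (sqrt (2/R))\<^sup>2" by (simp add: T_def power2_eq_square)
    thus ?thesis using assms(2) by simp
  qed
  have "39/64 * sqrt (2/R) = T - R * T^3 / 6"
  proof -
    have "T - R * T^3 / 6 = T * (1 - R * T\<^sup>2 / 6)"
      by (simp add: power3_eq_cube power2_eq_square algebra_simps)
    thus ?thesis unfolding T_sq by (simp add: T_def)
  qed
  also have "\<dots> \<le> integral {-pi..pi} (weight R)"
    using T_le T_nonneg T_sq by (intro weight_integral_lower_bound[OF assms]) auto
  finally show ?thesis .
qed

lemma saw_cos_integral_eq_weight:
  assumes "R + 1/2 \<in> \<int>" "0 < R"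
  shows "weight R integrable_on {-pi..pi}"
    and "integral {-pi..pi} (saw_cos R) = integral {-pi..pi} (weight R)"
proof -
  have diff: "((\<lambda>t. weight R t - saw_cos R t) has_integral 0) {-pi..pi}"
    by (rule weight_minus_saw_has_integral[OF assms])
  have "(\<lambda>t. (weight R t - saw_cos R t) + saw_cos R t) integrable_on {-pi..pi}"
    using diff saw_cos_integrable by (intro integrable_add) auto
  thus weight_int: "weight R integrable_on {-pi..pi}" by simp
  show "integral {-pi..pi} (saw_cos R) = integral {-pi..pi} (weight R)"
    using integral_diff[OF weight_int saw_cos_integrable] integral_unique[OF diff] by simp
qed

lemma Dd_cos_eq_saw_cos:
  assumes "0 < \<delta>"
  shows "Dd \<delta> (r * cos t) * cos t = \<delta> * saw_cos (r / \<delta>) t"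
  using assms by (simp add: Dd_def Qd_def saw_cos_def frac_def algebra_simps)

lemma scaling_constant:
  assumes "0 < r" "0 < \<delta>"
  shows "sqrt 2 * (\<delta> powr (3/2) / sqrt r) = \<delta> * sqrt (2 / (r / \<delta>))"
proof -
  have "\<delta> powr (3/2) = \<delta> * sqrt \<delta>"
    using powr_add[of \<delta> 1 "1/2"] assms(2) by (simp add: powr_half_sqrt)
  thus ?thesis using assms by (simp add: real_sqrt_divide real_sqrt_mult)
qed

theorem lemma5p1:
  fixes r \<delta> :: real
  assumes "r > 0" and "\<delta> > 0" and "r / \<delta> + 1/2 \<in> \<int>"
  shows "integral {-pi..pi} (\<lambda>\<theta>. Dd \<delta> (r * cos \<theta>) * cos \<theta>)
           \<ge> 16 * sqrt 2 / (3 * pi^2) * (\<delta> powr (3/2) / sqrt r)"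
proof -
  define R where "R = r / \<delta>"
  have R: "R + 1/2 \<in> \<int>" "0 < R" using assms by (simp_all add: R_def)
  have "16 / (3 * pi^2) \<le> 39/64"
    using power_mono[of 3 pi 2] pi_gt3 by (simp add: field_simps)
  have "16 * sqrt 2 / (3 * pi^2) * (\<delta> powr (3/2) / sqrt r)
      = 16 / (3 * pi^2) * (sqrt 2 * (\<delta> powr (3/2) / sqrt r))" by simp
  also have "\<dots> = 16 / (3 * pi^2) * (\<delta> * sqrt (2/R))"
    unfolding scaling_constant[OF assms(1,2)] R_def ..
  also have "\<dots> \<le> 39/64 * (\<delta> * sqrt (2/R))"
    using \<open>16 / (3 * pi^2) \<le> 39/64\<close> assms(2) R(2) by (intro mult_right_mono) auto
  also have "\<dots> = \<delta> * (39/64 * sqrt (2/R))" by simp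
  also have "\<dots> \<le> \<delta> * integral {-pi..pi} (weight R)"
    using weight_integral_ge[OF R saw_cos_integral_eq_weight(1)[OF R]] assms(2) by simp
  also have "\<dots> = \<delta> * integral {-pi..pi} (saw_cos R)"
    using saw_cos_integral_eq_weight(2)[OF R] by simp
  also have "\<dots> = integral {-pi..pi} (\<lambda>\<theta>. Dd \<delta> (r * cos \<theta>) * cos \<theta>)"
    using Dd_cos_eq_saw_cos[OF assms(2)] by (simp add: R_def)
  finally show ?thesis .
qed

end
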